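(* Consider the energy consumption game $\mathcal{G}^{\mathrm{HP}}_\alpha$ with hourly proportional billing described in the context, with quadratic costs $C_h(x)=a_{1,h}x+a_{2,h}x^2$, for a fixed $\alpha\in[0,1]$. Then $\mathcal{G}^{\mathrm{HP}}_\alpha$ is an exact potential game with potential $$W^{\mathrm{HP}}_\alpha(\boldsymbol{\ell})=(1-\alpha)\sum_{h\in\mathcal{H}}\Big[\frac{a_{2,h}}{2}\Big((\ell^h)^2+\sum_{n\in\mathcal N}(\ell_n^h)^2\Big)+a_{1,h}\ell^h\Big]-\alpha\sum_{n\in\mathcal{N}}u_n(\boldsymbol{\ell}_n),$$ i.e. for every $n$, every $\boldsymbol{\ell}_{-n}\in\prod_{m\neq n}\mathcal{L}_m$ and every $\boldsymbol{\ell}_n,\boldsymbol{\ell}_n'\in\mathcal{L}_n$, $f_n^\alpha(\boldsymbol{\ell}_n',\boldsymbol{\ell}_{-n})-f_n^\alpha(\boldsymbol{\ell}_n,\boldsymbol{\ell}_{-n})=W^{\mathrm{HP}}_\alpha(\boldsymbol{\ell}_n',\boldsymbol{\ell}_{-n})-W^{\mathrm{HP}}_\alpha(\boldsymbol{\ell}_n,\boldsymbol{\ell}_{-n})$.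
   Context: There is a finite set of users $\mathcal{N}=\{1,\dots,N\}$ and a finite set of time periods $\mathcal{H}$. Each user $n$ chooses a load profile $\boldsymbol{\ell}_n=(\ell_n^h)_{h\in\mathcal{H}}\in\mathbb{R}^{\mathcal H}$ in the feasible set $\mathcal{L}_n=\{\boldsymbol{\ell}_n:\sum_{h}\ell_n^h=E_n,\ \underline{\ell}_n^h\le \ell_n^h\le\overline{\ell}_n^h\ \forall h\}$ with given $E_n$ and bounds; $\boldsymbol{\ell}_{-n}=(\boldsymbol{\ell}_m)_{m\ne n}$, $\ell^h=\sum_n\ell_n^h$. The cost of period $h$ is $C_h(x)=a_{1,h}x+a_{2,h}x^2$ with real coefficients. Each user has a preferred profile $\hat{\boldsymbol{\ell}}_n$, weight $\omega_n>0$ and utility $u_n(\boldsymbol{\ell}_n)=-\omega_n\sum_h(\ell_n^h-\hat\ell_n^h)^2$. The hourly proportional (HP) bill is $b_n^{\mathrm{HP}}(\boldsymbol{\ell})=\sum_h\frac{\ell_n^h}{\ell^h}C_h(\ell^h)=\sum_h\ell_n^h(a_{1,h}+a_{2,h}\ell^h)$ (the right-hand form also defining it when $\ell^h=0$). User $n$'s cost is $f_n^\alpha(\boldsymbol{\ell}_n,\boldsymbol{\ell}_{-n})=(1-\alpha)b_n^{\mathrm{HP}}(\boldsymbol{\ell})-\alpha u_n(\boldsymbol{\ell}_n)$, minimized over $\mathcal L_n$. The game $\mathcal{G}^{\mathrm{HP}}_\alpha$ has players $\mathcal N$, strategy sets $\mathcal L_n$ and costs $f_n^\alpha$. *)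

theory Defs
  imports Complex_Main
begin

text \<open>Users are indexed by a finite set N (type 'u), periods by a finite set H (type 'h).
  A joint load profile is a function l :: 'u => 'h => real, l n h being user n's load in period h.\<close>

definition feasible_set ::
  "'h set \<Rightarrow> ('u \<Rightarrow> real) \<Rightarrow> ('u \<Rightarrow> 'h \<Rightarrow> real) \<Rightarrow> ('u \<Rightarrow> 'h \<Rightarrow> real) \<Rightarrow> 'u \<Rightarrow> ('h \<Rightarrow> real) set"
  where "feasible_set H E lo hi n =
    {x. (\<Sum>h\<in>H. x h) = E n \<and> (\<forall>h\<in>H. lo n h \<le> x h \<and> x h \<le> hi n h)}"

definition total_load :: "'u set \<Rightarrow> ('u \<Rightarrow> 'h \<Rightarrow> real) \<Rightarrow> 'h \<Rightarrow> real"
  where "total_load N l h = (\<Sum>n\<in>N. l n h)"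

definition cost_h :: "('h \<Rightarrow> real) \<Rightarrow> ('h \<Rightarrow> real) \<Rightarrow> 'h \<Rightarrow> real \<Rightarrow> real"
  where "cost_h a1 a2 h x = a1 h * x + a2 h * x^2"

text \<open>Hourly proportional bill, in the form valid also when the total load is 0.\<close>
definition bill_HP ::
  "'u set \<Rightarrow> 'h set \<Rightarrow> ('h \<Rightarrow> real) \<Rightarrow> ('h \<Rightarrow> real) \<Rightarrow> ('u \<Rightarrow> 'h \<Rightarrow> real) \<Rightarrow> 'u \<Rightarrow> real"
  where "bill_HP N H a1 a2 l n = (\<Sum>h\<in>H. l n h * (a1 h + a2 h * total_load N l h))"

definition utility ::
  "'h set \<Rightarrow> ('u \<Rightarrow> real) \<Rightarrow> ('u \<Rightarrow> 'h \<Rightarrow> real) \<Rightarrow> 'u \<Rightarrow> ('h \<Rightarrow> real) \<Rightarrow> real"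
  where "utility H \<omega> lhat n x = - \<omega> n * (\<Sum>h\<in>H. (x h - lhat n h)^2)"

definition cost_f ::
  "'u set \<Rightarrow> 'h set \<Rightarrow> ('h \<Rightarrow> real) \<Rightarrow> ('h \<Rightarrow> real) \<Rightarrow> ('u \<Rightarrow> real) \<Rightarrow> ('u \<Rightarrow> 'h \<Rightarrow> real)
    \<Rightarrow> real \<Rightarrow> ('u \<Rightarrow> 'h \<Rightarrow> real) \<Rightarrow> 'u \<Rightarrow> real"
  where "cost_f N H a1 a2 \<omega> lhat \<alpha> l n =
    (1 - \<alpha>) * bill_HP N H a1 a2 l n - \<alpha> * utility H \<omega> lhat n (l n)"

definition potential_HP ::
  "'u set \<Rightarrow> 'h set \<Rightarrow> ('h \<Rightarrow> real) \<Rightarrow> ('h \<Rightarrow> real) \<Rightarrow> ('u \<Rightarrow> real) \<Rightarrow> ('u \<Rightarrow> 'h \<Rightarrow> real)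
    \<Rightarrow> real \<Rightarrow> ('u \<Rightarrow> 'h \<Rightarrow> real) \<Rightarrow> real"
  where "potential_HP N H a1 a2 \<omega> lhat \<alpha> l =
    (1 - \<alpha>) * (\<Sum>h\<in>H. a2 h / 2 * ((total_load N l h)^2 + (\<Sum>n\<in>N. (l n h)^2))
                         + a1 h * total_load N l h)
    - \<alpha> * (\<Sum>n\<in>N. utility H \<omega> lhat n (l n))"

end

theory Submission
  imports Defs
begin

text \<open>For each user n the potential splits as the cost of n plus the potential of the game
  played by the other users alone, which does not depend on n's load profile; hence every
  unilateral change of n's profile changes the cost of n and the potential by the same amount.
  The split is pointwise in each period: with z the load of n and R the load of the others,
  a2/2 ((z + R)^2 + z^2) + a1 (z + R) = z (a1 + a2 (z + R)) + a2/2 R^2 + a1 R.\<close>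

lemma sum_fun_upd_remove:
  assumes "finite N" "n \<in> N"
  shows "(\<Sum>m\<in>N. g m ((l(n := z)) m)) = g n z + (\<Sum>m\<in>N - {n}. g m (l m))"
  using assms by (simp add: sum.remove)

lemma total_load_fun_upd:
  assumes "finite N" "n \<in> N"
  shows "total_load N (l(n := z)) h = z h + total_load (N - {n}) l h"
  unfolding total_load_def
  using sum_fun_upd_remove[OF assms, of "\<lambda>m x. x h"] by simp

lemma potential_HP_fun_upd:
  assumes "finite N" "n \<in> N"
  shows "potential_HP N H a1 a2 \<omega> lhat \<alpha> (l(n := z))
       = cost_f N H a1 a2 \<omega> lhat \<alpha> (l(n := z)) n + potential_HP (N - {n}) H a1 a2 \<omega> lhat \<alpha> l"
proof -
  let ?R = "total_load (N - {n}) l"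
  let ?S = "\<lambda>h. \<Sum>m\<in>N - {n}. (l m h)^2"
  have squares: "(\<Sum>m\<in>N. ((l(n := z)) m h)^2) = (z h)^2 + ?S h" for h
    using sum_fun_upd_remove[OF assms, of "\<lambda>m x. (x h)^2"] by simp
  have utilities: "(\<Sum>m\<in>N. utility H \<omega> lhat m ((l(n := z)) m))
                 = utility H \<omega> lhat n z + (\<Sum>m\<in>N - {n}. utility H \<omega> lhat m (l m))"
    using sum_fun_upd_remove[OF assms, of "utility H \<omega> lhat"] .
  have period: "a2 h / 2 * ((z h + ?R h)^2 + ((z h)^2 + ?S h)) + a1 h * (z h + ?R h)
      = z h * (a1 h + a2 h * (z h + ?R h)) + (a2 h / 2 * ((?R h)^2 + ?S h) + a1 h * ?R h)" for h
    by (simp add: power2_eq_square algebra_simps)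
  show ?thesis
    unfolding potential_HP_def cost_f_def bill_HP_def
      total_load_fun_upd[OF assms] squares utilities period
    by (simp add: sum.distrib algebra_simps)
qed

theorem theorem2:
  fixes N :: "'u set" and H :: "'h set"
    and E :: "'u \<Rightarrow> real" and lo hi lhat :: "'u \<Rightarrow> 'h \<Rightarrow> real"
    and a1 a2 :: "'h \<Rightarrow> real" and \<omega> :: "'u \<Rightarrow> real" and \<alpha> :: real
    and l :: "'u \<Rightarrow> 'h \<Rightarrow> real" and n :: 'u and x y :: "'h \<Rightarrow> real"
  assumes "finite N" and "finite H"
    and "\<forall>m\<in>N. \<omega> m > 0"
    and "0 \<le> \<alpha>" and "\<alpha> \<le> 1"
    and "n \<in> N"
    and "\<forall>m\<in>N - {n}. l m \<in> feasible_set H E lo hi m"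
    and "x \<in> feasible_set H E lo hi n" and "y \<in> feasible_set H E lo hi n"
  shows "cost_f N H a1 a2 \<omega> lhat \<alpha> (l(n := y)) n - cost_f N H a1 a2 \<omega> lhat \<alpha> (l(n := x)) n
       = potential_HP N H a1 a2 \<omega> lhat \<alpha> (l(n := y)) - potential_HP N H a1 a2 \<omega> lhat \<alpha> (l(n := x))"
  unfolding potential_HP_fun_upd[OF \<open>finite N\<close> \<open>n \<in> N\<close>] by simp

end
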